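(* Let $\Sigma$ be an oriented graph on $n$ vertices with skew adjacency matrix $S$ and walk-matrix $W=W(\Sigma)$ satisfying $\det W\neq0$, and let $P$ be a permutation matrix with $P^{\mathrm T}SP=S^{\mathrm T}=-S$. If $n$ is even, then $\mathrm{rank}(I-P)=\mathrm{rank}(I+P)=n/2$; if $n$ is odd, then $\mathrm{rank}(I-P)=(n-1)/2$ and $\mathrm{rank}(I+P)=(n+1)/2$, where ranks are over $\mathbb{Q}$. The same equalities hold for ranks over $\mathbb{F}_p$ for every odd prime $p$.
   Context: The skew adjacency matrix $S=(S_{ij})$ of an oriented graph on vertices $v_1,\dots,v_n$ has $S_{ij}=1$ if $(v_i,v_j)$ is a directed edge, $S_{ij}=-1$ if $(v_j,v_i)$ is a directed edge, and $S_{ij}=0$ otherwise. The walk-matrix is $W(\Sigma)=[e,Se,\ldots,S^{n-1}e]$ with $e$ the all-ones vector. *)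

theory Defs
  imports "Jordan_Normal_Form.DL_Rank" "Berlekamp_Zassenhaus.Finite_Field"
    "HOL-Combinatorics.Permutations"
begin

definition oriented_graph :: "nat \<Rightarrow> (nat \<Rightarrow> nat \<Rightarrow> bool) \<Rightarrow> bool" where
  "oriented_graph n E \<longleftrightarrow> (\<forall>i j. E i j \<longrightarrow> i < n \<and> j < n \<and> i \<noteq> j \<and> \<not> E j i)"

definition skew_adj :: "nat \<Rightarrow> (nat \<Rightarrow> nat \<Rightarrow> bool) \<Rightarrow> int mat" where
  "skew_adj n E = mat n n (\<lambda>(i,j). if E i j then 1 else if E j i then -1 else 0)"

definition walk_matrix :: "nat \<Rightarrow> int mat \<Rightarrow> int mat" where
  "walk_matrix n S = mat n n (\<lambda>(i,k). ((S ^\<^sub>m k) *\<^sub>v vec n (\<lambda>_. 1)) $ i)"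

definition perm_mat :: "nat \<Rightarrow> (nat \<Rightarrow> nat) \<Rightarrow> int mat" where
  "perm_mat n \<sigma> = mat n n (\<lambda>(i,j). if i = \<sigma> j then 1 else 0)"

definition is_perm_mat :: "nat \<Rightarrow> int mat \<Rightarrow> bool" where
  "is_perm_mat n P \<longleftrightarrow> (\<exists>\<sigma>. \<sigma> permutes {..<n} \<and> P = perm_mat n \<sigma>)"

definition mat_rank :: "'a::field mat \<Rightarrow> nat" where
  "mat_rank A = vec_space.rank (dim_row A) A"

end

theory Submission
  imports Defs
begin

text \<open>Since \<open>P\<close> is orthogonal and \<open>P\<^sup>T S P = -S\<close>, the matrix \<open>P\<close> anticommutes with \<open>S\<close>;
  as \<open>P e = e\<close>, this gives \<open>P S\<^sup>k e = (-1)\<^sup>k S\<^sup>k e\<close>, i.e. \<open>P W = W D\<close> with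
  \<open>D = diag(1, -1, 1, \<dots>)\<close>. Because \<open>det W \<noteq> 0\<close>, this forces \<open>P\<^sup>2 = I\<close> and
  \<open>tr P = tr D = n mod 2\<close>: the permutation is an involution with \<open>n div 2\<close> transpositions
  and \<open>n mod 2\<close> fixed points. For such an involution, over any field in which \<open>2 \<noteq> 0\<close>,
  \<open>rank(I - P)\<close> is the number of transpositions and \<open>rank(I + P)\<close> the number of orbits:
  the columns give the upper bounds, and \<open>(I - P) + (I + P) = 2I\<close> bounds the sum from below.\<close>

subsection \<open>Permutation matrices\<close>

lemma perm_mat_carrier [simp]: "perm_mat n \<sigma> \<in> carrier_mat n n"
  and perm_mat_dim [simp]: "dim_row (perm_mat n \<sigma>) = n" "dim_col (perm_mat n \<sigma>) = n"
  unfolding perm_mat_def by simp_all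

lemma perm_mat_index [simp]:
  "i < n \<Longrightarrow> j < n \<Longrightarrow> perm_mat n \<sigma> $$ (i, j) = (if i = \<sigma> j then 1 else 0)"
  unfolding perm_mat_def by simp

lemma perm_mat_id: "perm_mat n id = 1\<^sub>m n"
  by (rule eq_matI) auto

lemma perm_mat_mult:
  assumes "\<And>j. j < n \<Longrightarrow> \<tau> j < n"
  shows "perm_mat n \<sigma> * perm_mat n \<tau> = perm_mat n (\<sigma> \<circ> \<tau>)"
proof (rule eq_matI)
  fix i j assume "i < dim_row (perm_mat n (\<sigma> \<circ> \<tau>))" "j < dim_col (perm_mat n (\<sigma> \<circ> \<tau>))"
  then have i: "i < n" and j: "j < n" by simp_all
  have "(perm_mat n \<sigma> * perm_mat n \<tau>) $$ (i, j)
      = (\<Sum>k\<in>{0..<n}. (if i = \<sigma> k then 1 else 0) * (if k = \<tau> j then 1 else 0))"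
    using i j by (simp add: scalar_prod_def)
  also have "\<dots> = (\<Sum>k\<in>{0..<n}. if k = \<tau> j then (if i = \<sigma> k then 1 else 0) else 0)"
    by (rule sum.cong) auto
  also have "\<dots> = perm_mat n (\<sigma> \<circ> \<tau>) $$ (i, j)"
    using i j assms[OF j] by simp
  finally show "(perm_mat n \<sigma> * perm_mat n \<tau>) $$ (i, j) = perm_mat n (\<sigma> \<circ> \<tau>) $$ (i, j)" .
qed simp_all

lemma perm_mat_transpose:
  assumes "\<sigma> permutes {..<n}"
  shows "transpose_mat (perm_mat n \<sigma>) = perm_mat n (Hilbert_Choice.inv \<sigma>)"
proof (rule eq_matI)
  fix i j assume "i < dim_row (perm_mat n (Hilbert_Choice.inv \<sigma>))"
    "j < dim_col (perm_mat n (Hilbert_Choice.inv \<sigma>))"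
  then show "transpose_mat (perm_mat n \<sigma>) $$ (i, j) = perm_mat n (Hilbert_Choice.inv \<sigma>) $$ (i, j)"
    using permutes_inv_eq[OF assms, of j i] by auto
qed simp_all

lemma perm_mat_orthogonal:
  assumes "\<sigma> permutes {..<n}"
  shows "perm_mat n \<sigma> * transpose_mat (perm_mat n \<sigma>) = 1\<^sub>m n"
proof -
  have "\<And>j. j < n \<Longrightarrow> Hilbert_Choice.inv \<sigma> j < n"
    using permutes_in_image[OF permutes_inv[OF assms]] by simp
  then show ?thesis
    by (simp add: perm_mat_transpose[OF assms] perm_mat_mult permutes_inv_o[OF assms] perm_mat_id)
qed

lemma perm_mat_mult_ones:
  assumes "\<sigma> permutes {..<n}"
  shows "perm_mat n \<sigma> *\<^sub>v vec n (\<lambda>_. 1) = vec n (\<lambda>_. 1)"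
proof (rule eq_vecI)
  fix i assume "i < dim_vec (vec n (\<lambda>_. 1) :: int vec)"
  then have i: "i < n" by simp
  have "(perm_mat n \<sigma> *\<^sub>v vec n (\<lambda>_. 1)) $ i = (\<Sum>k\<in>{0..<n}. if i = \<sigma> k then 1 else 0 :: int)"
    using i by (simp add: scalar_prod_def)
  also have "\<dots> = (\<Sum>k\<in>{0..<n}. if k = Hilbert_Choice.inv \<sigma> i then 1 else 0)"
    by (rule sum.cong) (simp, metis permutes_inv_eq[OF assms])
  also have "\<dots> = 1"
    using i permutes_in_image[OF permutes_inv[OF assms]] by simp
  finally show "(perm_mat n \<sigma> *\<^sub>v vec n (\<lambda>_. 1)) $ i = vec n (\<lambda>_. 1) $ i"
    using i by simp
qed simp

lemma perm_mat_eq_one_imp_id: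
  assumes "\<sigma> permutes {..<n}" and "perm_mat n \<sigma> = 1\<^sub>m n"
  shows "\<sigma> = id"
proof
  fix j
  show "\<sigma> j = id j"
  proof (cases "j < n")
    case True
    then have "perm_mat n \<sigma> $$ (\<sigma> j, j) = 1\<^sub>m n $$ (\<sigma> j, j)"
      using assms(2) by simp
    then show ?thesis
      using True permutes_in_image[OF assms(1)] by (simp split: if_splits)
  next
    case False
    then show ?thesis using permutes_not_in[OF assms(1)] by simp
  qed
qed

subsection \<open>Trace and nonsingular intertwiners\<close>

definition trace_mat :: "'a :: comm_semiring_1 mat \<Rightarrow> 'a" where
  "trace_mat A = (\<Sum>i<dim_row A. A $$ (i, i))"

lemma trace_mat_mult_comm:
  assumes "A \<in> carrier_mat n m" and "B \<in> carrier_mat m n"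
  shows "trace_mat (A * B) = trace_mat (B * A)"
  using assms unfolding trace_mat_def
  by (simp add: scalar_prod_def atLeast0LessThan sum.swap[of _ "{..<n}"] mult.commute)

lemma trace_mat_smult:
  "A \<in> carrier_mat n n \<Longrightarrow> trace_mat (c \<cdot>\<^sub>m A) = c * trace_mat A"
  by (auto simp: trace_mat_def sum_distrib_left intro!: sum.cong)

lemma trace_mat_diag [simp]: "trace_mat (mat_diag n f) = (\<Sum>i<n. f i)"
  by (simp add: trace_mat_def mat_diag_def)

lemma trace_perm_mat: "trace_mat (perm_mat n \<sigma>) = int (card {j. j < n \<and> \<sigma> j = j})"
  by (simp add: trace_mat_def eq_commute[of _ "\<sigma> _"] sum.If_cases lessThan_def Collect_conj_eq)

lemma sum_neg_one_power: "(\<Sum>k<n. (-1 :: 'a :: ring_1) ^ k) = of_bool (odd n)"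
  by (induction n) auto

lemma mult_adj_mat_right:
  assumes "Z \<in> carrier_mat m n" and "W \<in> carrier_mat n n"
  shows "Z * W * adj_mat W = det W \<cdot>\<^sub>m Z"
proof -
  have "Z * W * adj_mat W = Z * (W * adj_mat W)"
    using assms adj_mat(1)[OF assms(2)] by simp
  also have "\<dots> = det W \<cdot>\<^sub>m Z"
    using assms by (simp add: adj_mat(2) mult_smult_distrib[OF assms(1) one_carrier_mat])
  finally show ?thesis .
qed

lemma mult_right_cancel_det:
  fixes X Y W :: "'a :: idom mat"
  assumes "X \<in> carrier_mat m n" "Y \<in> carrier_mat m n" "W \<in> carrier_mat n n"
    and "det W \<noteq> 0" and "X * W = Y * W"
  shows "X = Y"
proof -
  have smult_eq: "det W \<cdot>\<^sub>m X = det W \<cdot>\<^sub>m Y"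
    using mult_adj_mat_right[of X m n W] mult_adj_mat_right[of Y m n W] assms by metis
  show ?thesis
  proof (rule eq_matI)
    fix i j assume "i < dim_row Y" "j < dim_col Y"
    then show "X $$ (i, j) = Y $$ (i, j)"
      using arg_cong[OF smult_eq, of "\<lambda>M. M $$ (i, j)"] assms by simp
  qed (use assms in auto)
qed

lemma trace_mat_intertwined:
  fixes X Y W :: "'a :: idom mat"
  assumes X: "X \<in> carrier_mat n n" and Y: "Y \<in> carrier_mat n n" and W: "W \<in> carrier_mat n n"
    and "det W \<noteq> 0" and "X * W = W * Y"
  shows "trace_mat X = trace_mat Y"
proof -
  have adj: "adj_mat W \<in> carrier_mat n n" using adj_mat(1)[OF W] .
  have "det W * trace_mat X = trace_mat (X * W * adj_mat W)"
    using X W by (simp add: mult_adj_mat_right trace_mat_smult)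
  also have "\<dots> = trace_mat (adj_mat W * (W * Y))"
    unfolding \<open>X * W = W * Y\<close> by (rule trace_mat_mult_comm) (use W Y adj in auto)
  also have "\<dots> = trace_mat ((adj_mat W * W) * Y)"
    using W Y adj by simp
  also have "\<dots> = det W * trace_mat Y"
    using W Y by (simp add: adj_mat(3) mult_smult_assoc_mat[of _ n n] trace_mat_smult)
  finally show ?thesis using \<open>det W \<noteq> 0\<close> by simp
qed

subsection \<open>The walk matrix of an anticommuting pair\<close>

lemma anticommute_if_congruent_neg:
  fixes S P :: "'a :: comm_ring_1 mat"
  assumes S: "S \<in> carrier_mat n n" and P: "P \<in> carrier_mat n n"
    and "P * transpose_mat P = 1\<^sub>m n" and "transpose_mat P * S * P = - S"
  shows "S * P = - (P * S)"
proof -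
  have Pt: "transpose_mat P \<in> carrier_mat n n" using P by simp
  have "S * P = (P * transpose_mat P) * S * P" using assms by simp
  also have "\<dots> = P * (transpose_mat P * S * P)"
    using assoc_mult_mat[OF P mult_carrier_mat[OF Pt S] P] assoc_mult_mat[OF P Pt S] by simp
  also have "\<dots> = - (P * S)" using assms by simp
  finally show ?thesis .
qed

lemma anticommute_mult_pow:
  fixes S P :: "'a :: comm_ring_1 mat"
  assumes S: "S \<in> carrier_mat n n" and P: "P \<in> carrier_mat n n" and "S * P = - (P * S)"
  shows "P * S ^\<^sub>m k = (-1) ^ k \<cdot>\<^sub>m (S ^\<^sub>m k * P)"
proof (induction k)
  case 0
  show ?case using P S by (auto intro!: eq_matI)
next
  case (Suc k)
  have Sk: "S ^\<^sub>m k \<in> carrier_mat n n" using S by simp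
  have PS: "P * S = - (S * P)" using assms(3) by simp
  have "P * S ^\<^sub>m Suc k = (P * S ^\<^sub>m k) * S" using assoc_mult_mat[OF P Sk S] by simp
  also have "\<dots> = (-1) ^ k \<cdot>\<^sub>m (S ^\<^sub>m k * (P * S))"
    using Suc.IH mult_smult_assoc_mat[OF mult_carrier_mat[OF Sk P] S] assoc_mult_mat[OF Sk P S]
    by simp
  also have "\<dots> = (-1) ^ k \<cdot>\<^sub>m (- (S ^\<^sub>m Suc k * P))"
  proof -
    have "S ^\<^sub>m k * (P * S) = - (S ^\<^sub>m k * S * P)"
      unfolding PS assoc_mult_mat[OF Sk S P] by (rule uminus_mult_right_mat) (use Sk S P in simp)
    then show ?thesis by simp
  qed
  also have "\<dots> = (-1) ^ Suc k \<cdot>\<^sub>m (S ^\<^sub>m Suc k * P)"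
    by (rule eq_matI) auto
  finally show ?case .
qed

lemma smult_mat_mult_vec:
  "dim_vec v = dim_col A \<Longrightarrow> (c \<cdot>\<^sub>m A) *\<^sub>v v = (c :: 'a :: comm_semiring_0) \<cdot>\<^sub>v (A *\<^sub>v v)"
  by (intro eq_vecI) (auto simp: scalar_prod_def sum_distrib_left mult.assoc)

lemma walk_matrix_carrier [simp]: "walk_matrix n S \<in> carrier_mat n n"
  and walk_matrix_dim [simp]: "dim_row (walk_matrix n S) = n" "dim_col (walk_matrix n S) = n"
  unfolding walk_matrix_def by simp_all

lemma anticommuting_mult_walk_matrix:
  fixes S P :: "int mat"
  assumes S: "S \<in> carrier_mat n n" and P: "P \<in> carrier_mat n n" and "S * P = - (P * S)"
    and ones: "P *\<^sub>v vec n (\<lambda>_. 1) = vec n (\<lambda>_. 1)"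
  shows "P * walk_matrix n S = walk_matrix n S * mat_diag n (\<lambda>k. (-1) ^ k)"
proof (rule eq_matI)
  fix i k assume "i < dim_row (walk_matrix n S * mat_diag n (\<lambda>k. (-1) ^ k))"
    "k < dim_col (walk_matrix n S * mat_diag n (\<lambda>k. (-1) ^ k))"
  then have i: "i < n" and k: "k < n" by (simp_all add: mat_diag_def)
  have col: "col (walk_matrix n S) k = S ^\<^sub>m k *\<^sub>v vec n (\<lambda>_. 1)"
    using S k unfolding walk_matrix_def by (auto intro!: eq_vecI)
  have Sk: "S ^\<^sub>m k \<in> carrier_mat n n" using S by simp
  have "P *\<^sub>v col (walk_matrix n S) k = (P * S ^\<^sub>m k) *\<^sub>v vec n (\<lambda>_. 1)"
    using P Sk col by simp
  also have "\<dots> = (-1) ^ k \<cdot>\<^sub>v (S ^\<^sub>m k *\<^sub>v (P *\<^sub>v vec n (\<lambda>_. 1)))"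
    using P Sk by (simp add: anticommute_mult_pow[OF assms(1-3)] smult_mat_mult_vec)
  finally have "P *\<^sub>v col (walk_matrix n S) k = (-1) ^ k \<cdot>\<^sub>v col (walk_matrix n S) k"
    using col ones by simp
  then have "(P *\<^sub>v col (walk_matrix n S) k) $ i = walk_matrix n S $$ (i, k) * (-1) ^ k"
    using i k by simp
  then show "(P * walk_matrix n S) $$ (i, k)
      = (walk_matrix n S * mat_diag n (\<lambda>k. (-1) ^ k)) $$ (i, k)"
    using i k P by (simp add: mat_diag_mult_right[of _ n])
qed (use P in \<open>simp_all add: mat_diag_def\<close>)

lemma perm_mat_mult_walk_matrix:
  fixes S :: "int mat"
  assumes S: "S \<in> carrier_mat n n" and perm: "\<sigma> permutes {..<n}"
    and "transpose_mat (perm_mat n \<sigma>) * S * perm_mat n \<sigma> = - S"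
  shows "perm_mat n \<sigma> * walk_matrix n S = walk_matrix n S * mat_diag n (\<lambda>k. (-1) ^ k)"
proof (rule anticommuting_mult_walk_matrix[OF S perm_mat_carrier])
  show "S * perm_mat n \<sigma> = - (perm_mat n \<sigma> * S)"
    using anticommute_if_congruent_neg[OF S perm_mat_carrier perm_mat_orthogonal[OF perm]] assms(3) .
qed (rule perm_mat_mult_ones[OF perm])

lemma perm_mat_intertwined_alternating_signs:
  fixes W :: "int mat"
  assumes perm: "\<sigma> permutes {..<n}" and W: "W \<in> carrier_mat n n" and detW: "det W \<noteq> 0"
    and "perm_mat n \<sigma> * W = W * mat_diag n (\<lambda>k. (-1) ^ k)"
  shows "\<sigma> \<circ> \<sigma> = id" and "card {j. j < n \<and> \<sigma> j = j} = (if odd n then 1 else 0)"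
proof -
  define P where "P = perm_mat n \<sigma>"
  define D :: "int mat" where "D = mat_diag n (\<lambda>k. (-1) ^ k)"
  have P: "P \<in> carrier_mat n n" and D: "D \<in> carrier_mat n n" unfolding P_def D_def by simp_all
  have PW: "P * W = W * D" using assms(4) unfolding P_def D_def .
  have "P * P * W = (P * W) * D"
    using assoc_mult_mat[OF P P W] assoc_mult_mat[OF P W D] PW by simp
  also have "\<dots> = 1\<^sub>m n * W"
    using PW assoc_mult_mat[OF W D D] W by (simp add: D_def flip: power_mult_distrib)
  finally have "P * P = 1\<^sub>m n"
    by (rule mult_right_cancel_det[OF mult_carrier_mat[OF P P] one_carrier_mat W detW])
  then have "perm_mat n (\<sigma> \<circ> \<sigma>) = 1\<^sub>m n"
    using perm_mat_mult[of n \<sigma> \<sigma>] permutes_in_image[OF perm] unfolding P_def by simp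
  then show "\<sigma> \<circ> \<sigma> = id"
    by (rule perm_mat_eq_one_imp_id[OF permutes_compose[OF perm perm]])
  have "trace_mat P = trace_mat D"
    by (rule trace_mat_intertwined[OF P D W detW PW])
  then have "int (card {j. j < n \<and> \<sigma> j = j}) = of_bool (odd n)"
    by (simp add: P_def D_def trace_perm_mat sum_neg_one_power)
  then show "card {j. j < n \<and> \<sigma> j = j} = (if odd n then 1 else 0)"
    by (cases "odd n") simp_all
qed

subsection \<open>Ranks of \<open>I - P\<close> and \<open>I + P\<close> for an involution \<open>P\<close>\<close>

lemma involution_card:
  assumes perm: "\<sigma> permutes {..<n}" and invol: "\<sigma> \<circ> \<sigma> = id"
  shows "2 * card {j. j < n \<and> j < \<sigma> j} + card {j. j < n \<and> \<sigma> j = j} = n"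
proof -
  define N where "N = {j. j < n \<and> j < \<sigma> j}"
  define M where "M = {j. j < n \<and> \<sigma> j < j}"
  define F where "F = {j. j < n \<and> \<sigma> j = j}"
  have inv: "\<sigma> (\<sigma> j) = j" for j using invol by (metis comp_apply id_apply)
  have bound: "j < n \<Longrightarrow> \<sigma> j < n" for j using permutes_in_image[OF perm] by simp
  have "\<sigma> ` N = M"
  proof
    show "\<sigma> ` N \<subseteq> M" unfolding N_def M_def using bound inv by auto
    show "M \<subseteq> \<sigma> ` N"
    proof
      fix j assume "j \<in> M"
      then have "\<sigma> j \<in> N" unfolding M_def N_def using bound inv by auto
      then show "j \<in> \<sigma> ` N" using inv[of j] by (metis image_eqI)
    qed
  qed
  moreover have "inj_on \<sigma> N" using permutes_inj[OF perm] by (simp add: inj_on_def inj_def)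
  ultimately have "card M = card N" using card_image by blast
  moreover have "card {..<n} = card N + card M + card F"
  proof -
    have "{..<n} = N \<union> M \<union> F" unfolding N_def M_def F_def by auto
    moreover have "card (N \<union> M \<union> F) = card (N \<union> M) + card F"
      by (rule card_Un_disjoint) (auto simp: N_def M_def F_def)
    moreover have "card (N \<union> M) = card N + card M"
      by (rule card_Un_disjoint) (auto simp: N_def M_def)
    ultimately show ?thesis by simp
  qed
  ultimately show ?thesis unfolding N_def F_def by simp
qed

lemma involution_card_div_two:
  assumes "\<sigma> permutes {..<n}" and "\<sigma> \<circ> \<sigma> = id"
    and "card {j. j < n \<and> \<sigma> j = j} = (if odd n then 1 else 0)"
  shows "card {j. j < n \<and> j < \<sigma> j} = n div 2"
    and "card {j. j < n \<and> j < \<sigma> j} + card {j. j < n \<and> \<sigma> j = j} = (n + 1) div 2"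
proof -
  have "a = n div 2 \<and> a + b = (n + 1) div 2" if "2 * a + b = n" and "b = (if odd n then 1 else 0)"
    for a b :: nat
    using that by presburger
  then show "card {j. j < n \<and> j < \<sigma> j} = n div 2"
    and "card {j. j < n \<and> j < \<sigma> j} + card {j. j < n \<and> \<sigma> j = j} = (n + 1) div 2"
    using involution_card[OF assms(1,2)] assms(3) by blast+
qed

context vec_space
begin

lemma rank_le_card_span:
  assumes A: "A \<in> carrier_mat n nc" and T: "T \<subseteq> carrier_vec n" "finite T"
    and cols: "set (cols A) \<subseteq> span T"
  shows "rank A \<le> card T"
proof -
  have sub: "VectorSpace.subspace class_ring (span T) V" using span_is_subspace[OF T(1)] .
  have "span (set (cols A)) \<subseteq> span T" using span_subsetI[OF T(1) cols] .
  moreover have "VectorSpace.subspace class_ring (span (set (cols A))) V"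
    using span_is_subspace A cols_dim by blast
  ultimately have "VectorSpace.subspace class_ring (span (set (cols A))) (vs (span T))"
    using nested_subspaces sub by blast
  moreover have "vectorspace.fin_dim class_ring (span_vs (set (cols A)))"
    using A fin_dim_span_cols by blast
  ultimately have "rank A \<le> vectorspace.dim class_ring (vs (span T))"
    unfolding rank_def
    using vectorspace.subspace_dim[OF subspace_is_vs[OF sub]] fin_dim_span T by auto
  also have "\<dots> \<le> card T"
  proof -
    obtain U where U: "maximal U (\<lambda>X. X \<subseteq> T \<and> lin_indpt X)"
      using maximal_exists_superset[of T "\<lambda>X. X \<subseteq> T \<and> lin_indpt X" "{}"] T
      by (auto simp: finite_lin_indpt2)
    then have "vectorspace.dim class_ring (vs (span T)) = card U" using dim_span[OF T] by simp
    moreover have "U \<subseteq> T" using U unfolding maximal_def by blast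
    ultimately show ?thesis using T(2) card_mono by metis
  qed
  finally show ?thesis .
qed

lemma rank_le_card_if_cols_multiples:
  assumes A: "A \<in> carrier_mat n nc" and J: "J \<subseteq> {..<nc}"
    and cols: "\<And>j. j < nc \<Longrightarrow> col A j = 0\<^sub>v n \<or> (\<exists>i\<in>J. \<exists>c. col A j = c \<cdot>\<^sub>v col A i)"
  shows "rank A \<le> card J"
proof -
  have fin: "finite J" using J finite_subset by blast
  have T: "col A ` J \<subseteq> carrier_vec n" "finite (col A ` J)" using A fin by auto
  have "set (cols A) \<subseteq> span (col A ` J)"
  proof
    fix x assume "x \<in> set (cols A)"
    then obtain j where j: "j < nc" "x = col A j"
      using A by (metis carrier_matD(2) cols_length cols_nth in_set_conv_nth)
    from cols[OF j(1)] show "x \<in> span (col A ` J)"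
    proof
      assume "col A j = 0\<^sub>v n"
      then have "x = 0 \<cdot>\<^sub>v col A j" using j by auto
      then show ?thesis using T A by auto
    next
      assume "\<exists>i\<in>J. \<exists>c. col A j = c \<cdot>\<^sub>v col A i"
      then obtain i c where "i \<in> J" "x = c \<cdot>\<^sub>v col A i" using j by auto
      moreover have "col A i \<in> span (col A ` J)" using in_own_span[OF T(1)] \<open>i \<in> J\<close> by auto
      ultimately show ?thesis using T A by auto
    qed
  qed
  then have "rank A \<le> card (col A ` J)" by (rule rank_le_card_span[OF A T])
  also have "\<dots> \<le> card J" using fin by (rule card_image_le)
  finally show ?thesis .
qed

lemma dim_le_rank_add:
  assumes "A \<in> carrier_mat n n" and "B \<in> carrier_mat n n" and "det (A + B) \<noteq> 0"
  shows "n \<le> rank A + rank B"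
  using assms det_rank_iff[of "A + B"] rank_subadditive[of A n B] by simp

end

lemma col_one_minus_plus_perm_mat:
  assumes "j < n"
  shows "col (map_mat (of_int :: int \<Rightarrow> 'a :: ring_1) (1\<^sub>m n - perm_mat n \<sigma>)) j
      = vec n (\<lambda>i. of_bool (i = j) - of_bool (i = \<sigma> j))"
    and "col (map_mat (of_int :: int \<Rightarrow> 'a) (1\<^sub>m n + perm_mat n \<sigma>)) j
      = vec n (\<lambda>i. of_bool (i = j) + of_bool (i = \<sigma> j))"
  using assms by (auto intro!: eq_vecI)

lemma mat_rank_one_minus_perm_mat_le:
  assumes perm: "\<sigma> permutes {..<n}" and invol: "\<sigma> \<circ> \<sigma> = id"
  shows "mat_rank (map_mat (of_int :: int \<Rightarrow> 'a :: field) (1\<^sub>m n - perm_mat n \<sigma>))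
      \<le> card {j. j < n \<and> j < \<sigma> j}"
proof -
  let ?A = "map_mat (of_int :: int \<Rightarrow> 'a) (1\<^sub>m n - perm_mat n \<sigma>)"
  have inv: "\<sigma> (\<sigma> j) = j" for j using invol by (metis comp_apply id_apply)
  have bound: "j < n \<Longrightarrow> \<sigma> j < n" for j using permutes_in_image[OF perm] by simp
  have "vec_space.rank n ?A \<le> card {j. j < n \<and> j < \<sigma> j}"
  proof (rule vec_space.rank_le_card_if_cols_multiples)
    fix j assume j: "j < n"
    consider "\<sigma> j = j" | "j < \<sigma> j" | "\<sigma> j < j" by linarith
    then show "col ?A j = 0\<^sub>v n \<or> (\<exists>i\<in>{j. j < n \<and> j < \<sigma> j}. \<exists>c. col ?A j = c \<cdot>\<^sub>v col ?A i)"
    proof cases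
      case 1
      then show ?thesis using j by (auto simp: col_one_minus_plus_perm_mat)
    next
      case 2
      then have "col ?A j = 1 \<cdot>\<^sub>v col ?A j" using j by (auto intro!: eq_vecI)
      then show ?thesis using 2 j by blast
    next
      case 3
      then have "col ?A j = (-1) \<cdot>\<^sub>v col ?A (\<sigma> j)"
        using j bound[OF j] inv[of j] by (auto simp: col_one_minus_plus_perm_mat intro!: eq_vecI)
      moreover have "\<sigma> j \<in> {j. j < n \<and> j < \<sigma> j}" using 3 bound[OF j] inv[of j] by simp
      ultimately show ?thesis by blast
    qed
  qed auto
  then show ?thesis unfolding mat_rank_def by simp
qed

lemma mat_rank_one_plus_perm_mat_le:
  assumes perm: "\<sigma> permutes {..<n}" and invol: "\<sigma> \<circ> \<sigma> = id"
  shows "mat_rank (map_mat (of_int :: int \<Rightarrow> 'a :: field) (1\<^sub>m n + perm_mat n \<sigma>))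
      \<le> card {j. j < n \<and> j \<le> \<sigma> j}"
proof -
  let ?A = "map_mat (of_int :: int \<Rightarrow> 'a) (1\<^sub>m n + perm_mat n \<sigma>)"
  have inv: "\<sigma> (\<sigma> j) = j" for j using invol by (metis comp_apply id_apply)
  have bound: "j < n \<Longrightarrow> \<sigma> j < n" for j using permutes_in_image[OF perm] by simp
  have "vec_space.rank n ?A \<le> card {j. j < n \<and> j \<le> \<sigma> j}"
  proof (rule vec_space.rank_le_card_if_cols_multiples)
    fix j assume j: "j < n"
    consider "j \<le> \<sigma> j" | "\<sigma> j < j" by linarith
    then show "col ?A j = 0\<^sub>v n \<or> (\<exists>i\<in>{j. j < n \<and> j \<le> \<sigma> j}. \<exists>c. col ?A j = c \<cdot>\<^sub>v col ?A i)"
    proof cases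
      case 1
      then have "col ?A j = 1 \<cdot>\<^sub>v col ?A j" using j by (auto intro!: eq_vecI)
      then show ?thesis using 1 j by blast
    next
      case 2
      then have "col ?A j = 1 \<cdot>\<^sub>v col ?A (\<sigma> j)"
        using j bound[OF j] inv[of j] by (auto simp: col_one_minus_plus_perm_mat intro!: eq_vecI)
      moreover have "\<sigma> j \<in> {j. j < n \<and> j \<le> \<sigma> j}" using 2 bound[OF j] inv[of j] by simp
      ultimately show ?thesis by blast
    qed
  qed auto
  then show ?thesis unfolding mat_rank_def by simp
qed

lemma mat_rank_one_minus_plus_perm_mat:
  assumes perm: "\<sigma> permutes {..<n}" and invol: "\<sigma> \<circ> \<sigma> = id" and two: "(2 :: 'a :: field) \<noteq> 0"
  shows "mat_rank (map_mat (of_int :: int \<Rightarrow> 'a) (1\<^sub>m n - perm_mat n \<sigma>))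
      = card {j. j < n \<and> j < \<sigma> j}"
    and "mat_rank (map_mat (of_int :: int \<Rightarrow> 'a) (1\<^sub>m n + perm_mat n \<sigma>))
      = card {j. j < n \<and> j < \<sigma> j} + card {j. j < n \<and> \<sigma> j = j}"
proof -
  let ?M = "map_mat (of_int :: int \<Rightarrow> 'a) (1\<^sub>m n - perm_mat n \<sigma>)"
  let ?P = "map_mat (of_int :: int \<Rightarrow> 'a) (1\<^sub>m n + perm_mat n \<sigma>)"
  have "card {j. j < n \<and> j \<le> \<sigma> j} = card ({j. j < n \<and> j < \<sigma> j} \<union> {j. j < n \<and> \<sigma> j = j})"
    by (rule arg_cong[where f = card]) auto
  also have "\<dots> = card {j. j < n \<and> j < \<sigma> j} + card {j. j < n \<and> \<sigma> j = j}"
    by (rule card_Un_disjoint) auto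
  finally have plus_le: "mat_rank ?P \<le> card {j. j < n \<and> j < \<sigma> j} + card {j. j < n \<and> \<sigma> j = j}"
    using mat_rank_one_plus_perm_mat_le[OF perm invol, where 'a = 'a] by simp
  have "?M + ?P = 2 \<cdot>\<^sub>m 1\<^sub>m n"
    by (rule eq_matI) (auto simp: of_int_diff of_int_add)
  then have "det (?M + ?P) \<noteq> 0" using two by simp
  then have "n \<le> mat_rank ?M + mat_rank ?P"
    unfolding mat_rank_def using vec_space.dim_le_rank_add[of ?M n ?P]
    by (simp add: minus_carrier_mat[OF perm_mat_carrier])
  then show "mat_rank ?M = card {j. j < n \<and> j < \<sigma> j}"
    and "mat_rank ?P = card {j. j < n \<and> j < \<sigma> j} + card {j. j < n \<and> \<sigma> j = j}"
    using mat_rank_one_minus_perm_mat_le[OF perm invol, where 'a = 'a] plus_le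
      involution_card[OF perm invol] by linarith+
qed

lemma two_neq_zero_mod_ring:
  assumes "odd CARD('p :: prime_card)"
  shows "(2 :: 'p mod_ring) \<noteq> 0"
proof
  assume "(2 :: 'p mod_ring) = 0"
  then have "CARD('p) dvd 2"
    using of_nat_eq_0_iff_char_dvd[of 2, where 'a = "'p mod_ring"] by simp
  then have "CARD('p) \<le> 2" by (simp add: dvd_imp_le)
  then show False using assms nontriv[where 'a = 'p] by (simp add: numeral_2_eq_2 le_Suc_eq)
qed

theorem lemma2p11:
  fixes n :: nat and E :: "nat \<Rightarrow> nat \<Rightarrow> bool" and P :: "int mat"
  defines "S \<equiv> skew_adj n E"
  assumes "oriented_graph n E"
    and "det (walk_matrix n S) \<noteq> 0"
    and "is_perm_mat n P"
    and "transpose_mat P * S * P = transpose_mat S"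
    and "transpose_mat S = - S"
  shows "(even n \<longrightarrow>
            mat_rank (map_mat rat_of_int (1\<^sub>m n - P)) = n div 2 \<and>
            mat_rank (map_mat rat_of_int (1\<^sub>m n + P)) = n div 2) \<and>
         (odd n \<longrightarrow>
            mat_rank (map_mat rat_of_int (1\<^sub>m n - P)) = (n - 1) div 2 \<and>
            mat_rank (map_mat rat_of_int (1\<^sub>m n + P)) = (n + 1) div 2) \<and>
         (odd CARD('p::prime_card) \<longrightarrow>
           (even n \<longrightarrow>
              mat_rank (map_mat (of_int :: int \<Rightarrow> 'p mod_ring) (1\<^sub>m n - P)) = n div 2 \<and>
              mat_rank (map_mat (of_int :: int \<Rightarrow> 'p mod_ring) (1\<^sub>m n + P)) = n div 2) \<and>
           (odd n \<longrightarrow>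
              mat_rank (map_mat (of_int :: int \<Rightarrow> 'p mod_ring) (1\<^sub>m n - P)) = (n - 1) div 2 \<and>
              mat_rank (map_mat (of_int :: int \<Rightarrow> 'p mod_ring) (1\<^sub>m n + P)) = (n + 1) div 2))"
proof -
  obtain \<sigma> where perm: "\<sigma> permutes {..<n}" and P: "P = perm_mat n \<sigma>"
    using assms(4) unfolding is_perm_mat_def by blast
  have "S \<in> carrier_mat n n" unfolding S_def skew_adj_def by simp
  then have "perm_mat n \<sigma> * walk_matrix n S = walk_matrix n S * mat_diag n (\<lambda>k. (-1) ^ k)"
    using perm_mat_mult_walk_matrix perm assms(5,6) P by simp
  then have invol: "\<sigma> \<circ> \<sigma> = id" and "card {j. j < n \<and> \<sigma> j = j} = (if odd n then 1 else 0)"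
    using perm_mat_intertwined_alternating_signs[OF perm walk_matrix_carrier assms(3)] by simp_all
  then have half: "card {j. j < n \<and> j < \<sigma> j} = n div 2"
    and half_up: "card {j. j < n \<and> j < \<sigma> j} + card {j. j < n \<and> \<sigma> j = j} = (n + 1) div 2"
    using involution_card_div_two[OF perm] by simp_all
  have rat: "mat_rank (map_mat rat_of_int (1\<^sub>m n - P)) = n div 2"
    "mat_rank (map_mat rat_of_int (1\<^sub>m n + P)) = (n + 1) div 2"
    using mat_rank_one_minus_plus_perm_mat[OF perm invol, where 'a = rat] half half_up P by simp_all
  have mod_p: "mat_rank (map_mat (of_int :: int \<Rightarrow> 'p mod_ring) (1\<^sub>m n - P)) = n div 2 \<and>
      mat_rank (map_mat (of_int :: int \<Rightarrow> 'p mod_ring) (1\<^sub>m n + P)) = (n + 1) div 2"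
    if "odd CARD('p::prime_card)"
    using mat_rank_one_minus_plus_perm_mat[OF perm invol two_neq_zero_mod_ring[OF that]]
      half half_up P by simp
  have "even n \<Longrightarrow> (n + 1) div 2 = n div 2" by presburger
  moreover have "odd n \<Longrightarrow> (n - 1) div 2 = n div 2" by presburger
  ultimately show ?thesis using rat mod_p by auto
qed

end
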